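(* Let $1\le M\le N$. There is a constant $c_M>0$ (depending only on $M$) such that the following holds for every complex $N\times M$ matrix $\mathbf{H}$ of full column rank. Let $d_{\mathbf{H}}$ be the minimum distance of the lattice $\{\mathbf{H}\mathbf{z}:\mathbf{z}\in\mathbb{Z}[i]^M\}$, let $\mathbf{B}=\mathbf{H}^{-\mathtt{H}}\mathbf{U}$ (with $\mathbf{U}$ unimodular) be an LLL-reduced basis of the lattice generated by $\mathbf{H}^{-\mathtt{H}}=\mathbf{H}(\mathbf{H}^{\mathtt{H}}\mathbf{H})^{-1}$, and let $\mathbf{y}=\mathbf{H}\mathbf{x}+\mathbf{w}$ with $\mathbf{x}\in\mathbb{Z}[i]^M$, $\mathbf{w}\in\mathbb{C}^N$. If $\|\mathbf{w}\|<c_M d_{\mathbf{H}}$, then the LLL-aided (type I) decoder correctly decodes, i.e. $\widehat{\mathbf{x}}=\mathbf{x}$.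
   Context: $(\cdot)^{\mathtt{H}}$ is the conjugate transpose; $\mathbb{Z}[i]$ is the ring of Gaussian integers; a unimodular matrix is a matrix with entries in $\mathbb{Z}[i]$ whose inverse also has entries in $\mathbb{Z}[i]$. The lattice generated by an $N\times M$ matrix $\mathbf{G}$ of full column rank is $\{\mathbf{G}\mathbf{z}:\mathbf{z}\in\mathbb{Z}[i]^M\}$; its minimum distance is the smallest norm of a nonzero lattice vector. A basis is LLL-reduced in the sense of the Lenstra–Lenstra–Lovász reduction (extended to complex lattices over $\mathbb{Z}[i]$): with Gram–Schmidt vectors $\mathbf{b}_k^*$ and coefficients $\mu_{k,j}=\langle\mathbf{b}_k,\mathbf{b}_j^*\rangle/\|\mathbf{b}_j^*\|^2$, one has $|\mathrm{Re}\,\mu_{k,j}|,|\mathrm{Im}\,\mu_{k,j}|\le 1/2$ for $j<k$ and $\|\mathbf{b}_k^*\|^2\ge(3/4-|\mu_{k,k-1}|^2)\|\mathbf{b}_{k-1}^*\|^2$. The LLL-aided (type I) decoder computes $\tilde{\mathbf{x}}$ as the closest point of $\mathbb{Z}[i]^M$ to $\mathbf{B}^{\mathtt{H}}\mathbf{y}$ and outputs $\widehat{\mathbf{x}}=\mathbf{U}^{-\mathtt{H}}\tilde{\mathbf{x}}$. *)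

theory Defs
  imports "Jordan_Normal_Form.Schur_Decomposition"
begin

definition gint :: "complex \<Rightarrow> bool" where
  "gint z \<longleftrightarrow> Re z \<in> \<int> \<and> Im z \<in> \<int>"

definition gint_vec :: "nat \<Rightarrow> complex vec \<Rightarrow> bool" where
  "gint_vec n v \<longleftrightarrow> v \<in> carrier_vec n \<and> (\<forall>i<n. gint (v $ i))"

definition gint_mat :: "complex mat \<Rightarrow> bool" where
  "gint_mat A \<longleftrightarrow> (\<forall>i<dim_row A. \<forall>j<dim_col A. gint (A $$ (i, j)))"

definition minv :: "complex mat \<Rightarrow> complex mat" where
  "minv A = (THE B. B \<in> carrier_mat (dim_row A) (dim_row A) \<and> inverts_mat A B \<and> inverts_mat B A)"

definition unimodular :: "nat \<Rightarrow> complex mat \<Rightarrow> bool" where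
  "unimodular m U \<longleftrightarrow> U \<in> carrier_mat m m \<and> gint_mat U \<and> invertible_mat U \<and> gint_mat (minv U)"

definition cinner :: "complex vec \<Rightarrow> complex vec \<Rightarrow> complex" where
  "cinner a b = (\<Sum>i<dim_vec a. a $ i * cnj (b $ i))"

definition sqnorm :: "complex vec \<Rightarrow> real" where
  "sqnorm v = (\<Sum>i<dim_vec v. (cmod (v $ i))\<^sup>2)"

definition vnorm :: "complex vec \<Rightarrow> real" where
  "vnorm v = sqrt (sqnorm v)"

fun gso :: "complex mat \<Rightarrow> nat \<Rightarrow> complex vec" where
  "gso B k = vec (dim_row B) (\<lambda>i. col B k $ i -
      (\<Sum>j<k. (cinner (col B k) (gso B j) / complex_of_real (sqnorm (gso B j))) * (gso B j $ i)))"

definition gs_mu :: "complex mat \<Rightarrow> nat \<Rightarrow> nat \<Rightarrow> complex" where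
  "gs_mu B k j = cinner (col B k) (gso B j) / complex_of_real (sqnorm (gso B j))"

definition LLL_reduced :: "complex mat \<Rightarrow> bool" where
  "LLL_reduced B \<longleftrightarrow>
     (\<forall>k<dim_col B. \<forall>j<k. \<bar>Re (gs_mu B k j)\<bar> \<le> 1/2 \<and> \<bar>Im (gs_mu B k j)\<bar> \<le> 1/2) \<and>
     (\<forall>k. 1 \<le> k \<and> k < dim_col B \<longrightarrow>
        sqnorm (gso B k) \<ge> (3/4 - (cmod (gs_mu B k (k - 1)))\<^sup>2) * sqnorm (gso B (k - 1)))"

definition full_col_rank :: "complex mat \<Rightarrow> bool" where
  "full_col_rank H \<longleftrightarrow> (\<forall>z \<in> carrier_vec (dim_col H). H *\<^sub>v z = 0\<^sub>v (dim_row H) \<longrightarrow> z = 0\<^sub>v (dim_col H))"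

definition min_dist :: "complex mat \<Rightarrow> real" where
  "min_dist H = Inf {vnorm (H *\<^sub>v z) | z. gint_vec (dim_col H) z \<and> z \<noteq> 0\<^sub>v (dim_col H)}"

text \<open>Type I LLL-aided decoding: xt is a closest point of Z[i]^M to B^H y.\<close>
definition closest_gint :: "nat \<Rightarrow> complex vec \<Rightarrow> complex vec \<Rightarrow> bool" where
  "closest_gint m t xt \<longleftrightarrow> gint_vec m xt \<and>
     (\<forall>z. gint_vec m z \<longrightarrow> vnorm (t - xt) \<le> vnorm (t - z))"

end

theory Submission
  imports Defs "HOL-Analysis.L2_Norm"
begin

text \<open>
  Write \<open>A = H\<^sup>H H\<close>, \<open>B = H A\<^sup>-\<^sup>1 U\<close> and let \<open>g\<close> be the last Gram--Schmidt vector of \<open>B\<close>.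
  Since \<open>B\<^sup>H H = U\<^sup>H\<close>, the decoder sees \<open>B\<^sup>H y = U\<^sup>H x + B\<^sup>H w\<close> with \<open>U\<^sup>H x\<close> a Gaussian
  integer vector, so it suffices that \<open>\<parallel>B\<^sup>H w\<parallel> < 1/2\<close>.
  The lattice vector \<open>d = H U\<^sup>-\<^sup>H e\<^sub>M\<close> lies in the span of \<open>B\<close> and satisfies
  \<open>B\<^sup>H d = e\<^sub>M\<close>; such a dual vector has \<open>\<parallel>d\<parallel> \<parallel>g\<parallel> = 1\<close>, whence \<open>d\<^sub>H \<parallel>g\<parallel> \<le> 1\<close>.
  LLL reduction gives \<open>\<parallel>g\<^sub>j\<parallel> \<le> 2\<^sup>M \<parallel>g\<parallel>\<close> and \<open>|\<mu>\<^sub>k\<^sub>j| \<le> 1\<close>, so every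
  \<open>|\<langle>w, b\<^sub>k\<rangle>|\<close> is at most \<open>M 2\<^sup>M \<parallel>w\<parallel> \<parallel>g\<parallel>\<close> and
  \<open>\<parallel>B\<^sup>H w\<parallel> \<le> M\<^sup>2 2\<^sup>M \<parallel>w\<parallel> / d\<^sub>H\<close>. Hence \<open>c\<^sub>M = 1 / (4 M\<^sup>2 2\<^sup>M)\<close> works.
\<close>

lemma dim_mat_adjoint [simp]:
  "dim_row (mat_adjoint A) = dim_col A" "dim_col (mat_adjoint A) = dim_row A"
  unfolding mat_adjoint_def by auto

lemma mat_adjoint_carrier: "A \<in> carrier_mat n m \<Longrightarrow> mat_adjoint A \<in> carrier_mat m n"
  by (rule carrier_matI) (simp_all only: dim_mat_adjoint carrier_matD)

lemma index_mat_adjoint [simp]: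
  "i < dim_col A \<Longrightarrow> j < dim_row A \<Longrightarrow> mat_adjoint (A :: complex mat) $$ (i, j) = cnj (A $$ (j, i))"
  unfolding mat_adjoint_def by (simp add: mat_of_rows_index)

lemma mat_adjoint_one [simp]: "mat_adjoint (1\<^sub>m n :: complex mat) = 1\<^sub>m n"
  by (rule eq_matI) simp_all

lemma mat_adjoint_mat_adjoint [simp]: "mat_adjoint (mat_adjoint (A :: complex mat)) = A"
  by (rule eq_matI) simp_all

lemma mat_adjoint_mult:
  assumes "(A :: complex mat) \<in> carrier_mat n m" "B \<in> carrier_mat m p"
  shows "mat_adjoint (A * B) = mat_adjoint B * mat_adjoint A"
  by (rule eq_matI) (use assms in \<open>simp_all add: scalar_prod_def mult.commute\<close>)

lemma index_mat_adjoint_mult_vec: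
  assumes "k < dim_col B" "dim_vec w = dim_row B"
  shows "(mat_adjoint (B :: complex mat) *\<^sub>v w) $ k = cinner w (col B k)"
  using assms by (simp add: cinner_def scalar_prod_def mult.commute row_def atLeast0LessThan)

lemma cinner_commute: "dim_vec a = dim_vec b \<Longrightarrow> cinner a b = cnj (cinner b a)"
  unfolding cinner_def by (simp add: mult.commute)

lemma cinner_self: "cinner v v = complex_of_real (sqnorm v)"
  unfolding cinner_def sqnorm_def by (simp only: of_real_sum complex_norm_square)

lemma vnorm_eq_L2_set: "vnorm v = L2_set (\<lambda>i. cmod (v $ i)) {..<dim_vec v}"
  unfolding vnorm_def sqnorm_def L2_set_def ..

lemma sqnorm_nonneg: "sqnorm v \<ge> 0"
  unfolding sqnorm_def by (intro sum_nonneg) simp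

lemma vnorm_nonneg: "vnorm v \<ge> 0"
  unfolding vnorm_def by (simp add: sqnorm_nonneg)

lemma sqnorm_eq_0_imp_zero: assumes "sqnorm v = 0" shows "v = 0\<^sub>v (dim_vec v)"
proof (rule eq_vecI)
  fix i assume i: "i < dim_vec (0\<^sub>v (dim_vec v))"
  have "(cmod (v $ i))\<^sup>2 = 0"
    using assms i unfolding sqnorm_def by (subst (asm) sum_nonneg_eq_0_iff) auto
  then show "v $ i = 0\<^sub>v (dim_vec v) $ i" using i by simp
qed simp

lemma cmod_index_le_vnorm: "i < dim_vec v \<Longrightarrow> cmod (v $ i) \<le> vnorm v"
  unfolding vnorm_eq_L2_set by (rule member_le_L2_set) auto

lemma vnorm_le_sum_cmod: "vnorm v \<le> (\<Sum>i<dim_vec v. cmod (v $ i))"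
  unfolding vnorm_eq_L2_set by (rule L2_set_le_sum) simp

lemma cmod_cinner_le:
  assumes "dim_vec a = dim_vec b"
  shows "cmod (cinner a b) \<le> vnorm a * vnorm b"
proof -
  let ?I = "{..<dim_vec a}"
  have "cmod (cinner a b) \<le> (\<Sum>i\<in>?I. cmod (a $ i * cnj (b $ i)))"
    unfolding cinner_def by (rule norm_sum)
  also have "\<dots> = (\<Sum>i\<in>?I. \<bar>cmod (a $ i)\<bar> * \<bar>cmod (b $ i)\<bar>)"
    by (simp add: norm_mult)
  also have "\<dots> \<le> L2_set (\<lambda>i. cmod (a $ i)) ?I * L2_set (\<lambda>i. cmod (b $ i)) ?I"
    by (rule L2_set_mult_ineq)
  also have "\<dots> = vnorm a * vnorm b"
    unfolding vnorm_eq_L2_set using assms by simp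
  finally show ?thesis .
qed

lemma cinner_mult_mat_vec_left:
  assumes B: "B \<in> carrier_mat N M" and c: "c \<in> carrier_vec M" and u: "dim_vec u = N"
  shows "cinner (B *\<^sub>v c) u = (\<Sum>k<M. c $ k * cinner (col B k) u)"
proof -
  have "(B *\<^sub>v c) $ i * cnj (u $ i) = (\<Sum>k<M. c $ k * (B $$ (i, k) * cnj (u $ i)))" if "i < N" for i
  proof -
    have "(B *\<^sub>v c) $ i = (\<Sum>k<M. B $$ (i, k) * c $ k)"
      using B c that by (simp add: scalar_prod_def atLeast0LessThan)
    then show ?thesis by (simp add: sum_distrib_right sum_distrib_left mult.commute mult.left_commute)
  qed
  then have "cinner (B *\<^sub>v c) u = (\<Sum>i<N. \<Sum>k<M. c $ k * (B $$ (i, k) * cnj (u $ i)))"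
    unfolding cinner_def using B by simp
  also have "\<dots> = (\<Sum>k<M. c $ k * cinner (col B k) u)"
    unfolding cinner_def using B u by (simp add: sum.swap[of _ "{..<M}"] sum_distrib_left)
  finally show ?thesis .
qed

lemma cinner_mult_mat_vec_right:
  assumes B: "B \<in> carrier_mat N M" and c: "c \<in> carrier_vec M" and u: "dim_vec u = N"
  shows "cinner u (B *\<^sub>v c) = (\<Sum>k<M. cnj (c $ k) * cinner u (col B k))"
proof -
  have "cinner u (B *\<^sub>v c) = cnj (cinner (B *\<^sub>v c) u)"
    using B u by (subst cinner_commute) simp_all
  also have "\<dots> = (\<Sum>k<M. cnj (c $ k) * cnj (cinner (col B k) u))"
    unfolding cinner_mult_mat_vec_left[OF B c u] by simp
  also have "\<dots> = (\<Sum>k<M. cnj (c $ k) * cinner u (col B k))"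
    using B u by (intro sum.cong refl) (subst (2) cinner_commute, simp_all)
  finally show ?thesis .
qed

declare gso.simps [simp del]

lemma dim_gso [simp]: "dim_vec (gso B k) = dim_row B"
  by (subst gso.simps) simp

lemma index_gso:
  "i < dim_row B \<Longrightarrow> gso B k $ i = col B k $ i - (\<Sum>j<k. gs_mu B k j * gso B j $ i)"
  by (subst gso.simps) (simp add: gs_mu_def)

lemma cinner_gso_left:
  assumes "dim_vec u = dim_row B"
  shows "cinner (gso B k) u = cinner (col B k) u - (\<Sum>j<k. gs_mu B k j * cinner (gso B j) u)"
proof -
  have "cinner (gso B k) u
      = (\<Sum>i<dim_row B. (col B k $ i - (\<Sum>j<k. gs_mu B k j * gso B j $ i)) * cnj (u $ i))"
    unfolding cinner_def dim_gso by (intro sum.cong refl) (simp add: index_gso[of _ B k])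
  also have "\<dots> = (\<Sum>i<dim_row B. col B k $ i * cnj (u $ i))
      - (\<Sum>i<dim_row B. \<Sum>j<k. gs_mu B k j * (gso B j $ i * cnj (u $ i)))"
    by (simp only: left_diff_distrib sum_distrib_right mult.assoc sum_subtractf)
  also have "(\<Sum>i<dim_row B. \<Sum>j<k. gs_mu B k j * (gso B j $ i * cnj (u $ i)))
      = (\<Sum>j<k. gs_mu B k j * cinner (gso B j) u)"
    unfolding cinner_def dim_gso by (simp only: sum.swap[of _ "{..<k}"] sum_distrib_left)
  finally show ?thesis unfolding cinner_def by (simp only: dim_gso index_col dim_col)
qed

lemma cinner_col_gso_expand:
  "dim_vec u = dim_row B \<Longrightarrow>
    cinner (col B k) u = cinner (gso B k) u + (\<Sum>j<k. gs_mu B k j * cinner (gso B j) u)"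
  using cinner_gso_left[of u B k] by simp

lemma cinner_gso_orthogonal_less: "j < k \<Longrightarrow> cinner (gso B k) (gso B j) = 0"
proof (induction k arbitrary: j rule: less_induct)
  case (less k)
  have earlier: "cinner (gso B l) (gso B j) = 0" if "l < k" "l \<noteq> j" for l
  proof (cases "j < l")
    case False
    then have "cinner (gso B j) (gso B l) = 0" using that less.IH[of j l] less.prems by simp
    then show ?thesis by (subst cinner_commute) simp_all
  qed (use less.IH that in blast)
  have "(\<Sum>l<k. gs_mu B k l * cinner (gso B l) (gso B j)) = gs_mu B k j * cinner (gso B j) (gso B j)"
    using less.prems by (subst sum.remove[of _ j]) (auto simp: earlier intro!: sum.neutral)
  also have "\<dots> = cinner (col B k) (gso B j)"
    \<comment> \<open>if \<open>g\<^sub>j = 0\<close> then \<open>gs_mu B k j\<close> is a division by zero, but both sides vanish\<close>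
  proof (cases "sqnorm (gso B j) = 0")
    case True
    then have "gso B j = 0\<^sub>v (dim_row B)" using sqnorm_eq_0_imp_zero by fastforce
    then show ?thesis by (simp add: cinner_def)
  qed (simp add: gs_mu_def cinner_self)
  finally show ?case using cinner_gso_left[of "gso B j" B k] by simp
qed

lemma cinner_gso_orthogonal: "j \<noteq> k \<Longrightarrow> cinner (gso B j) (gso B k) = 0"
  by (cases "j < k") (auto simp: cinner_gso_orthogonal_less cinner_commute[of "gso B j"])

lemma cinner_col_gso:
  assumes "k \<le> l"
  shows "cinner (col B k) (gso B l) = (if k = l then complex_of_real (sqnorm (gso B l)) else 0)"
proof -
  have "(\<Sum>j<k. gs_mu B k j * cinner (gso B j) (gso B l)) = 0"
    using assms by (intro sum.neutral) (simp add: cinner_gso_orthogonal)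
  then show ?thesis
    using cinner_col_gso_expand[of "gso B l" B k] assms
    by (simp add: cinner_self cinner_gso_orthogonal)
qed

lemma sqnorm_dual_vector_mult_sqnorm_last_gso:
  assumes B: "B \<in> carrier_mat N M" and M: "1 \<le> M" and c: "c \<in> carrier_vec M"
    and dual: "\<And>j. j < M \<Longrightarrow> cinner (col B j) (B *\<^sub>v c) = (if j = M - 1 then 1 else 0)"
  shows "sqnorm (B *\<^sub>v c) * sqnorm (gso B (M - 1)) = 1"
proof -
  \<comment> \<open>\<open>\<langle>g, d\<rangle> = 1\<close>, while expanding \<open>d = B c\<close> gives \<open>\<langle>d, d\<rangle> = c\<^sub>M\<close> and \<open>\<langle>g, d\<rangle> = cnj c\<^sub>M \<parallel>g\<parallel>\<^sup>2\<close>\<close>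
  define d where "d = B *\<^sub>v c"
  define g where "g = gso B (M - 1)"
  have dim_d: "dim_vec d = dim_row B" and dim_g: "dim_vec g = dim_row B"
    using B unfolding d_def g_def by simp_all
  have gso_d: "cinner (gso B j) d = (if j = M - 1 then 1 else 0)" if "j < M" for j
    using that
  proof (induction j rule: less_induct)
    case (less j)
    then have "(\<Sum>l<j. gs_mu B j l * cinner (gso B l) d) = 0"
      by (intro sum.neutral) auto
    then show ?case using cinner_gso_left[OF dim_d, of j] dual[OF less.prems] by (simp add: d_def)
  qed
  have "cinner d d = (\<Sum>k<M. c $ k * cinner (col B k) d)"
    unfolding d_def using cinner_mult_mat_vec_left[OF B c] dim_d B d_def by simp
  also have "\<dots> = c $ (M - 1)"
    using M by (simp add: dual d_def if_distrib sum.delta cong: if_cong)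
  finally have d_d: "complex_of_real (sqnorm d) = c $ (M - 1)" by (simp add: cinner_self)
  have g_col: "cinner g (col B k) = (if k = M - 1 then complex_of_real (sqnorm g) else 0)"
    if "k < M" for k
    using that cinner_col_gso[of k "M - 1" B] cinner_commute[of g "col B k"] B
    by (simp add: g_def)
  have "1 = cinner g d" using gso_d[of "M - 1"] M by (simp add: g_def)
  also have "\<dots> = (\<Sum>k<M. cnj (c $ k) * cinner g (col B k))"
    unfolding d_def using B dim_g by (intro cinner_mult_mat_vec_right[OF B c]) simp
  also have "\<dots> = cnj (c $ (M - 1)) * complex_of_real (sqnorm g)"
    using M by (simp add: g_col if_distrib sum.delta cong: if_cong)
  also have "\<dots> = complex_of_real (sqnorm d * sqnorm g)"
    by (subst d_d [symmetric]) simp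
  finally show ?thesis unfolding d_def g_def by (metis of_real_eq_1_iff)
qed

lemma LLL_reduced_cmod_gs_mu_sq_le:
  assumes "LLL_reduced B" "j < k" "k < dim_col B"
  shows "(cmod (gs_mu B k j))\<^sup>2 \<le> 1/2"
proof -
  have "\<bar>Re (gs_mu B k j)\<bar> \<le> 1/2" "\<bar>Im (gs_mu B k j)\<bar> \<le> 1/2"
    using assms unfolding LLL_reduced_def by auto
  then have "(Re (gs_mu B k j))\<^sup>2 \<le> (1/2)\<^sup>2" "(Im (gs_mu B k j))\<^sup>2 \<le> (1/2)\<^sup>2"
    by (simp_all only: power2_le_iff_abs_le)
  then show ?thesis unfolding cmod_power2 by (simp add: power_divide)
qed

lemma LLL_reduced_cmod_gs_mu_le_1:
  assumes "LLL_reduced B" "j < k" "k < dim_col B"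
  shows "cmod (gs_mu B k j) \<le> 1"
  by (rule power2_le_imp_le) (use LLL_reduced_cmod_gs_mu_sq_le[OF assms] in simp_all)

lemma LLL_reduced_sqnorm_gso_le:
  assumes "LLL_reduced B" "1 \<le> k" "k < dim_col B"
  shows "sqnorm (gso B (k - 1)) \<le> 4 * sqnorm (gso B k)"
proof -
  have "(cmod (gs_mu B k (k - 1)))\<^sup>2 \<le> 1/2"
    using LLL_reduced_cmod_gs_mu_sq_le[OF assms(1) _ assms(3), of "k - 1"] assms(2) by simp
  then have "1/4 * sqnorm (gso B (k - 1)) \<le> (3/4 - (cmod (gs_mu B k (k - 1)))\<^sup>2) * sqnorm (gso B (k - 1))"
    by (intro mult_right_mono) (simp_all add: sqnorm_nonneg)
  also have "\<dots> \<le> sqnorm (gso B k)"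
    using assms unfolding LLL_reduced_def by blast
  finally show ?thesis by simp
qed

lemma LLL_reduced_vnorm_gso_le_last:
  assumes L: "LLL_reduced B" and j: "j < dim_col B"
  shows "vnorm (gso B j) \<le> 2 ^ dim_col B * vnorm (gso B (dim_col B - 1))"
proof -
  let ?M = "dim_col B" and ?g = "sqnorm (gso B (dim_col B - 1))"
  have "j \<le> ?M - 1" using j by simp
  then have "sqnorm (gso B j) \<le> 4 ^ (?M - 1 - j) * ?g"
  proof (induction j rule: inc_induct)
    case (step n)
    have "sqnorm (gso B n) \<le> 4 * sqnorm (gso B (Suc n))"
      using LLL_reduced_sqnorm_gso_le[OF L, of "Suc n"] step.hyps by simp
    also have "\<dots> \<le> 4 * (4 ^ (?M - 1 - Suc n) * ?g)"
      using step.IH by simp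
    also have "\<dots> = 4 ^ (?M - 1 - n) * ?g"
      using step.hyps by (simp add: Suc_diff_Suc flip: power_Suc)
    finally show ?case .
  qed simp
  also have "\<dots> \<le> 4 ^ ?M * ?g"
    by (intro mult_right_mono power_increasing) (simp_all add: sqnorm_nonneg)
  also have "\<dots> = (2 ^ ?M * vnorm (gso B (?M - 1)))\<^sup>2"
  proof -
    have "(4::real) ^ ?M = (2 ^ ?M)\<^sup>2"
      by (simp add: power2_eq_square flip: power_mult_distrib)
    then show ?thesis unfolding vnorm_def by (simp add: power_mult_distrib sqnorm_nonneg)
  qed
  finally show ?thesis
    unfolding vnorm_def by (intro real_le_lsqrt) (simp_all add: sqnorm_nonneg)
qed

lemma LLL_reduced_cmod_cinner_col_le:
  assumes L: "LLL_reduced B" and k: "k < dim_col B" and w: "dim_vec w = dim_row B"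
  shows "cmod (cinner w (col B k)) \<le> (\<Sum>j<dim_col B. cmod (cinner (gso B j) w))"
proof -
  have "cmod (cinner w (col B k)) = cmod (cinner (col B k) w)"
    using w by (subst cinner_commute) simp_all
  also have "\<dots> \<le> cmod (cinner (gso B k) w) + (\<Sum>j<k. cmod (gs_mu B k j * cinner (gso B j) w))"
    unfolding cinner_col_gso_expand[OF w]
    by (rule order_trans[OF norm_triangle_ineq add_left_mono[OF norm_sum]])
  also have "\<dots> \<le> cmod (cinner (gso B k) w) + (\<Sum>j<k. cmod (cinner (gso B j) w))"
    using LLL_reduced_cmod_gs_mu_le_1[OF L _ k]
    by (intro add_left_mono sum_mono) (simp add: norm_mult mult_left_le_one_le)
  also have "\<dots> = (\<Sum>j<Suc k. cmod (cinner (gso B j) w))"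
    by simp
  also have "\<dots> \<le> (\<Sum>j<dim_col B. cmod (cinner (gso B j) w))"
    using k by (intro sum_mono2) auto
  finally show ?thesis .
qed

lemma LLL_reduced_vnorm_adjoint_mult_vec_le:
  assumes L: "LLL_reduced B" and B: "B \<in> carrier_mat N M" and w: "w \<in> carrier_vec N"
  shows "vnorm (mat_adjoint B *\<^sub>v w) \<le> (real M)\<^sup>2 * 2 ^ M * vnorm w * vnorm (gso B (M - 1))"
proof -
  have dim_B: "dim_row B = N" "dim_col B = M" using B by simp_all
  have gso_w: "cmod (cinner (gso B j) w) \<le> 2 ^ M * vnorm w * vnorm (gso B (M - 1))"
    if "j < M" for j
  proof -
    have "cmod (cinner (gso B j) w) \<le> vnorm (gso B j) * vnorm w"
      using B w by (intro cmod_cinner_le) simp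
    also have "\<dots> \<le> 2 ^ M * vnorm (gso B (M - 1)) * vnorm w"
      using LLL_reduced_vnorm_gso_le_last[OF L, of j] that B
      by (intro mult_right_mono) (simp_all add: vnorm_nonneg)
    finally show ?thesis by (simp add: mult_ac)
  qed
  have "vnorm (mat_adjoint B *\<^sub>v w) \<le> (\<Sum>k<M. cmod ((mat_adjoint B *\<^sub>v w) $ k))"
    using vnorm_le_sum_cmod[of "mat_adjoint B *\<^sub>v w"] dim_B by (simp del: index_mult_mat_vec)
  also have "\<dots> \<le> (\<Sum>k<M. \<Sum>j<M. cmod (cinner (gso B j) w))"
    using LLL_reduced_cmod_cinner_col_le[OF L] w dim_B
    by (intro sum_mono) (simp add: index_mat_adjoint_mult_vec del: index_mult_mat_vec)
  also have "\<dots> \<le> (\<Sum>k<M. \<Sum>j<M. 2 ^ M * vnorm w * vnorm (gso B (M - 1)))"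
    using gso_w by (intro sum_mono) simp
  also have "\<dots> = (real M)\<^sup>2 * 2 ^ M * vnorm w * vnorm (gso B (M - 1))"
    by (simp add: power2_eq_square)
  finally show ?thesis .
qed

lemma gint_0 [simp]: "gint 0" and gint_1 [simp]: "gint 1"
  unfolding gint_def by auto

lemma gint_diff: "gint a \<Longrightarrow> gint b \<Longrightarrow> gint (a - b)"
  unfolding gint_def by auto

lemma gint_mult: "gint a \<Longrightarrow> gint b \<Longrightarrow> gint (a * b)"
  unfolding gint_def by auto

lemma gint_cnj: "gint a \<Longrightarrow> gint (cnj a)"
  unfolding gint_def by auto

lemma gint_sum: "(\<And>i. i \<in> A \<Longrightarrow> gint (f i)) \<Longrightarrow> gint (sum f A)"
  unfolding gint_def by (auto simp: Re_sum Im_sum intro!: Ints_sum)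

lemma gint_cmod_less_1: assumes "gint z" "cmod z < 1" shows "z = 0"
proof -
  obtain a b :: int where ab: "Re z = a" "Im z = b"
    using assms(1) unfolding gint_def by (auto elim!: Ints_cases)
  have "\<bar>Re z\<bar> < 1" "\<bar>Im z\<bar> < 1"
    using abs_Re_le_cmod[of z] abs_Im_le_cmod[of z] assms(2) by linarith+
  then have "a = 0" "b = 0" using ab by simp_all
  then show ?thesis using ab by (simp add: complex_eq_iff)
qed

lemma gint_mat_adjoint: "gint_mat A \<Longrightarrow> gint_mat (mat_adjoint A)"
  unfolding gint_mat_def by (auto intro: gint_cnj)

lemma gint_vec_mult_mat_vec:
  assumes "gint_mat A" "A \<in> carrier_mat m n" "gint_vec n v"
  shows "gint_vec m (A *\<^sub>v v)"
  using assms unfolding gint_vec_def gint_mat_def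
  by (auto simp: scalar_prod_def intro!: gint_sum gint_mult)

lemma unit_vec_gint_vec: "k < n \<Longrightarrow> gint_vec n (unit_vec n k)"
  unfolding gint_vec_def by (simp add: unit_vec_def)

lemma closest_gint_eq:
  assumes p: "gint_vec M p" and v: "v \<in> carrier_vec M" and small: "vnorm v < 1/2"
    and xt: "closest_gint M (p + v) xt"
  shows "xt = p"
proof (rule eq_vecI)
  have p_M: "p \<in> carrier_vec M" and xt_M: "xt \<in> carrier_vec M" and "gint_vec M xt"
    using p xt unfolding gint_vec_def closest_gint_def by auto
  then show "dim_vec xt = dim_vec p" by simp
  have "(p + v) - p = v" using p_M v by auto
  then have near: "vnorm ((p + v) - xt) \<le> vnorm v"
    using xt p unfolding closest_gint_def by metis
  fix k assume "k < dim_vec p"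
  then have k: "k < M" using p_M by simp
  have "cmod (xt $ k - p $ k) = cmod (v $ k - ((p + v) - xt) $ k)"
    using k p_M v xt_M by simp
  also have "\<dots> \<le> vnorm v + vnorm ((p + v) - xt)"
    using k p_M v xt_M
    by (intro order_trans[OF norm_triangle_ineq4] add_mono cmod_index_le_vnorm) simp_all
  also have "\<dots> < 1" using near small by simp
  finally have "xt $ k - p $ k = 0"
    using \<open>gint_vec M xt\<close> p k unfolding gint_vec_def by (intro gint_cmod_less_1 gint_diff) auto
  then show "xt $ k = p $ k" by simp
qed

lemma
  assumes "invertible_mat (A :: complex mat)" "A \<in> carrier_mat n n"
  shows minv_carrier: "minv A \<in> carrier_mat n n"
    and mult_minv: "A * minv A = 1\<^sub>m n"
    and minv_mult: "minv A * A = 1\<^sub>m n"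
proof -
  obtain B where AB: "A * B = 1\<^sub>m n" and BA: "B * A = 1\<^sub>m (dim_row B)"
    using assms unfolding invertible_mat_def inverts_mat_def by auto
  have B: "B \<in> carrier_mat n n"
    using arg_cong[OF AB, of dim_col] arg_cong[OF BA, of dim_col] assms(2)
    by (intro carrier_matI) auto
  have unique: "C = B" if "C \<in> carrier_mat n n \<and> inverts_mat A C \<and> inverts_mat C A" for C
  proof -
    have C: "C \<in> carrier_mat n n" "C * A = 1\<^sub>m n"
      using that assms(2) unfolding inverts_mat_def by auto
    have "C = C * (A * B)" using C AB by simp
    also have "\<dots> = (C * A) * B" using assoc_mult_mat[OF C(1) assms(2) B] by simp
    finally show ?thesis using C B by simp
  qed
  have "minv A = B"
    unfolding minv_def using assms(2) B AB BA
    by (intro the_equality unique) (auto simp: inverts_mat_def)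
  then show "minv A \<in> carrier_mat n n" "A * minv A = 1\<^sub>m n" "minv A * A = 1\<^sub>m n"
    using B AB BA by auto
qed

lemma mat_adjoint_minv_cancel:
  assumes "invertible_mat (U :: complex mat)" "U \<in> carrier_mat n n" "x \<in> carrier_vec n"
  shows "mat_adjoint (minv U) *\<^sub>v (mat_adjoint U *\<^sub>v x) = x"
proof -
  have Ui: "minv U \<in> carrier_mat n n" using minv_carrier[OF assms(1,2)] .
  have "mat_adjoint (minv U) *\<^sub>v (mat_adjoint U *\<^sub>v x) = (mat_adjoint (minv U) * mat_adjoint U) *\<^sub>v x"
    using assoc_mult_mat_vec[OF mat_adjoint_carrier[OF Ui] mat_adjoint_carrier[OF assms(2)] assms(3)] ..
  also have "mat_adjoint (minv U) * mat_adjoint U = 1\<^sub>m n"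
    using mat_adjoint_mult[OF assms(2) Ui] mult_minv[OF assms(1,2)] by simp
  finally show ?thesis using assms(3) by simp
qed

lemma invertible_mat_adjoint_mult_self:
  assumes H: "(H :: complex mat) \<in> carrier_mat N M" and rank: "full_col_rank H"
  shows "invertible_mat (mat_adjoint H * H)"
proof -
  let ?A = "mat_adjoint H * H"
  have adj_H: "mat_adjoint H \<in> carrier_mat M N" using H by (rule mat_adjoint_carrier)
  then have A: "?A \<in> carrier_mat M M" using H by simp
  have "det ?A \<noteq> 0"
  proof
    assume "det ?A = 0"
    then obtain v where v: "v \<in> carrier_vec M" "v \<noteq> 0\<^sub>v M" "?A *\<^sub>v v = 0\<^sub>v M"
      using det_0_iff_vec_prod_zero[OF A] by blast
    define u where "u = H *\<^sub>v v"
    have dim_u: "dim_vec u = N" using H unfolding u_def by simp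
    have adj_u: "mat_adjoint H *\<^sub>v u = 0\<^sub>v M"
      using v(3) assoc_mult_mat_vec[OF adj_H H v(1)] unfolding u_def by simp
    have "cinner u u = (\<Sum>k<M. cnj (v $ k) * cinner u (col H k))"
      unfolding u_def using H by (intro cinner_mult_mat_vec_right[OF H v(1)]) simp
    also have "\<dots> = (\<Sum>k<M. cnj (v $ k) * (mat_adjoint H *\<^sub>v u) $ k)"
      using H dim_u by (intro sum.cong refl) (simp add: index_mat_adjoint_mult_vec del: index_mult_mat_vec)
    also have "\<dots> = 0" using adj_u by simp
    finally have "u = 0\<^sub>v N"
      using sqnorm_eq_0_imp_zero[of u] dim_u by (simp add: cinner_self)
    then show False using rank v H unfolding full_col_rank_def u_def by auto
  qed
  then obtain B where B: "B \<in> carrier_mat M M" "B * ?A = 1\<^sub>m M" "?A * B = 1\<^sub>m M"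
    using det_non_zero_imp_unit[OF A] unfolding Units_def ring_mat_def by auto
  then show ?thesis unfolding invertible_mat_def inverts_mat_def
    using A by (intro conjI exI[of _ B]) (auto simp: square_mat.simps)
qed

lemma dual_basis:
  assumes H: "H \<in> carrier_mat N M" "full_col_rank H" and U: "U \<in> carrier_mat M M" "invertible_mat U"
  defines "B \<equiv> H * minv (mat_adjoint H * H) * U"
  shows "B \<in> carrier_mat N M" "mat_adjoint B * H = mat_adjoint U"
    "B * (minv U * (mat_adjoint H * H)) = H"
proof -
  let ?A = "mat_adjoint H * H"
  have adj_H: "mat_adjoint H \<in> carrier_mat M N" using H(1) by (rule mat_adjoint_carrier)
  have A: "?A \<in> carrier_mat M M" and inv_A: "invertible_mat ?A"
    using adj_H H by (simp_all add: invertible_mat_adjoint_mult_self)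
  have Ai: "minv ?A \<in> carrier_mat M M" "?A * minv ?A = 1\<^sub>m M" "minv ?A * ?A = 1\<^sub>m M"
    using minv_carrier[OF inv_A A] mult_minv[OF inv_A A] minv_mult[OF inv_A A] .
  have Ui: "minv U \<in> carrier_mat M M" "U * minv U = 1\<^sub>m M"
    using minv_carrier[OF U(2,1)] mult_minv[OF U(2,1)] .
  have adj_Ai: "mat_adjoint (minv ?A) \<in> carrier_mat M M" using Ai(1) by (rule mat_adjoint_carrier)
  have adj_U: "mat_adjoint U \<in> carrier_mat M M" using U(1) by (rule mat_adjoint_carrier)
  show "B \<in> carrier_mat N M" unfolding B_def using H Ai U by simp
  have "mat_adjoint ?A = ?A"
    using mat_adjoint_mult[OF adj_H H(1)] by simp
  then have adj_Ai_A: "mat_adjoint (minv ?A) * ?A = 1\<^sub>m M"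
    using mat_adjoint_mult[OF A Ai(1)] Ai(2) by simp
  have "mat_adjoint B = mat_adjoint U * (mat_adjoint (minv ?A) * mat_adjoint H)"
    unfolding B_def mat_adjoint_mult[OF mult_carrier_mat[OF H(1) Ai(1)] U(1)]
    by (simp add: mat_adjoint_mult[OF H(1) Ai(1)])
  then have "mat_adjoint B * H = mat_adjoint U * (mat_adjoint (minv ?A) * ?A)"
    using assoc_mult_mat[OF adj_U _ H(1), of "mat_adjoint (minv ?A) * mat_adjoint H"]
      assoc_mult_mat[OF adj_Ai adj_H H(1)] adj_Ai adj_H
    by simp
  then show "mat_adjoint B * H = mat_adjoint U"
    using adj_Ai_A right_mult_one_mat[OF adj_U] by simp
  have "B * (minv U * ?A) = H * (minv ?A * ((U * minv U) * ?A))"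
    unfolding B_def using H(1) Ai(1) Ui(1) U(1) A
    by (simp add: assoc_mult_mat[of _ N M _ M _ M] assoc_mult_mat[of _ M M _ M _ M])
  then show "B * (minv U * ?A) = H"
    using H(1) Ai Ui A by simp
qed

lemma min_dist_le_vnorm:
  assumes "gint_vec (dim_col H) z" "z \<noteq> 0\<^sub>v (dim_col H)"
  shows "min_dist H \<le> vnorm (H *\<^sub>v z)"
  unfolding min_dist_def using assms
  by (intro cInf_lower bdd_belowI[of _ 0]) (auto simp: vnorm_nonneg)

lemma min_dist_mult_vnorm_last_gso_le_1:
  assumes H: "H \<in> carrier_mat N M" "full_col_rank H" and M: "1 \<le> M" and U: "unimodular M U"
  shows "min_dist H * vnorm (gso (H * minv (mat_adjoint H * H) * U) (M - 1)) \<le> 1"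
proof -
  define B where "B = H * minv (mat_adjoint H * H) * U"
  define C where "C = minv U * (mat_adjoint H * H)"
  define e :: "complex vec" where "e = unit_vec M (M - 1)"
  define z where "z = mat_adjoint (minv U) *\<^sub>v e"
  have U_M: "U \<in> carrier_mat M M" "invertible_mat U" "gint_mat (minv U)"
    using U unfolding unimodular_def by auto
  have B: "B \<in> carrier_mat N M" and BH: "mat_adjoint B * H = mat_adjoint U" and BC: "B * C = H"
    using dual_basis[OF H U_M(1,2)] unfolding B_def C_def by auto
  have Ui: "minv U \<in> carrier_mat M M" "minv U * U = 1\<^sub>m M"
    using minv_carrier[OF U_M(2,1)] minv_mult[OF U_M(2,1)] .
  have C_M: "C \<in> carrier_mat M M"
    unfolding C_def using Ui(1) H(1) mat_adjoint_carrier[OF H(1)] by simp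
  have adj_Ui: "mat_adjoint (minv U) \<in> carrier_mat M M" using Ui(1) by (rule mat_adjoint_carrier)
  have adj_U: "mat_adjoint U \<in> carrier_mat M M" using U_M(1) by (rule mat_adjoint_carrier)
  have e: "e \<in> carrier_vec M" unfolding e_def by simp
  have z: "z \<in> carrier_vec M" "gint_vec M z"
    unfolding z_def e_def using adj_Ui M
    by (auto intro!: gint_vec_mult_mat_vec gint_mat_adjoint U_M(3) unit_vec_gint_vec)
  have "mat_adjoint U *\<^sub>v z = mat_adjoint (minv U * U) *\<^sub>v e"
    unfolding z_def mat_adjoint_mult[OF Ui(1) U_M(1)]
    by (rule assoc_mult_mat_vec[OF adj_U adj_Ui e, symmetric])
  then have Uz: "mat_adjoint U *\<^sub>v z = e" using Ui(2) e by simp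
  have "z \<noteq> 0\<^sub>v M"
  proof
    assume "z = 0\<^sub>v M"
    then have "(mat_adjoint U *\<^sub>v z) $ (M - 1) = 0"
      using U_M(1) M by (simp add: carrier_matD scalar_prod_def)
    then show False using Uz M unfolding e_def by simp
  qed
  then have d_long: "min_dist H \<le> vnorm (H *\<^sub>v z)"
    using min_dist_le_vnorm[of H z] z H(1) by simp
  have BHz: "mat_adjoint B *\<^sub>v (H *\<^sub>v z) = e"
    using assoc_mult_mat_vec[OF mat_adjoint_carrier[OF B] H(1) z(1)] BH Uz by simp
  have "cinner (col B j) (H *\<^sub>v z) = (if j = M - 1 then 1 else 0)" if "j < M" for j
  proof -
    have "cinner (H *\<^sub>v z) (col B j) = e $ j"
      using index_mat_adjoint_mult_vec[of j B "H *\<^sub>v z"] that B H(1) BHz by simp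
    then show ?thesis
      using cinner_commute[of "col B j" "H *\<^sub>v z"] that B H(1) unfolding e_def by simp
  qed
  moreover have "H *\<^sub>v z = B *\<^sub>v (C *\<^sub>v z)"
    using assoc_mult_mat_vec[OF B C_M z(1)] BC by simp
  ultimately have "sqnorm (H *\<^sub>v z) * sqnorm (gso B (M - 1)) = 1"
    using sqnorm_dual_vector_mult_sqnorm_last_gso[OF B M, of "C *\<^sub>v z"] C_M z(1) by simp
  then have "vnorm (H *\<^sub>v z) * vnorm (gso B (M - 1)) = 1"
    unfolding vnorm_def by (simp flip: real_sqrt_mult)
  then show ?thesis
    using mult_right_mono[OF d_long vnorm_nonneg[of "gso B (M - 1)"]] unfolding B_def by simp
qed

lemma LLL_aided_decoding_correct:
  assumes M: "1 \<le> M" and H: "H \<in> carrier_mat N M" "full_col_rank H" and U: "unimodular M U"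
    and L: "LLL_reduced (H * minv (mat_adjoint H * H) * U)"
    and x: "gint_vec M x" and w: "w \<in> carrier_vec N"
    and w_small: "vnorm w < 1 / (4 * (real M)\<^sup>2 * 2 ^ M) * min_dist H"
    and xt: "closest_gint M (mat_adjoint (H * minv (mat_adjoint H * H) * U) *\<^sub>v (H *\<^sub>v x + w)) xt"
  shows "mat_adjoint (minv U) *\<^sub>v xt = x"
proof -
  define B where "B = H * minv (mat_adjoint H * H) * U"
  have U_M: "U \<in> carrier_mat M M" "invertible_mat U" "gint_mat U"
    using U unfolding unimodular_def by auto
  have B: "B \<in> carrier_mat N M" and BH: "mat_adjoint B * H = mat_adjoint U"
    using dual_basis[OF H U_M(1,2)] unfolding B_def by auto
  have x_M: "x \<in> carrier_vec M" using x unfolding gint_vec_def by simp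
  let ?g = "vnorm (gso B (M - 1))"
  have "vnorm (mat_adjoint B *\<^sub>v w) \<le> (real M)\<^sup>2 * 2 ^ M * vnorm w * ?g"
    using LLL_reduced_vnorm_adjoint_mult_vec_le[OF L[folded B_def] B w] .
  also have "\<dots> \<le> (real M)\<^sup>2 * 2 ^ M * (1 / (4 * (real M)\<^sup>2 * 2 ^ M) * min_dist H) * ?g"
    using w_small by (intro mult_right_mono mult_left_mono) (simp_all add: vnorm_nonneg)
  also have "\<dots> = 1/4 * (min_dist H * ?g)"
    using M by simp
  also have "\<dots> \<le> 1/4"
    using min_dist_mult_vnorm_last_gso_le_1[OF H M U] unfolding B_def by simp
  finally have noise: "vnorm (mat_adjoint B *\<^sub>v w) < 1/2" by simp
  have "mat_adjoint B *\<^sub>v (H *\<^sub>v x + w) = mat_adjoint U *\<^sub>v x + mat_adjoint B *\<^sub>v w"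
    using mat_adjoint_carrier[OF B] H(1) x_M w
    by (simp add: mult_add_distrib_mat_vec assoc_mult_mat_vec flip: BH)
  then have "xt = mat_adjoint U *\<^sub>v x"
    using closest_gint_eq[OF gint_vec_mult_mat_vec[OF gint_mat_adjoint[OF U_M(3)]
        mat_adjoint_carrier[OF U_M(1)] x] _ noise] xt[folded B_def] mat_adjoint_carrier[OF B] w
    by simp
  then show ?thesis
    using mat_adjoint_minv_cancel[OF U_M(2,1) x_M] by simp
qed

theorem lemma3:
  fixes M :: nat
  assumes "1 \<le> M"
  shows "\<exists>c>0. \<forall>N (H :: complex mat) U x w xt.
    M \<le> N \<and> H \<in> carrier_mat N M \<and> full_col_rank H \<and>
    unimodular M U \<and> LLL_reduced (H * minv (mat_adjoint H * H) * U) \<and>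
    gint_vec M x \<and> w \<in> carrier_vec N \<and> vnorm w < c * min_dist H \<and>
    closest_gint M (mat_adjoint (H * minv (mat_adjoint H * H) * U) *\<^sub>v (H *\<^sub>v x + w)) xt
    \<longrightarrow> mat_adjoint (minv U) *\<^sub>v xt = x"
proof (intro exI[of _ "1 / (4 * (real M)\<^sup>2 * 2 ^ M)"] conjI allI impI)
  show "1 / (4 * (real M)\<^sup>2 * 2 ^ M) > 0" using assms by simp
qed (elim conjE, rule LLL_aided_decoding_correct[OF assms])

end
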